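(* There is a function $f$ (on an interval of $\mathbb{R}^{\mathbb{Z}_<}$) such that, in $\mathbb{R}^{\mathbb{Z}_<}$, $f$ satisfies $\mathrm{ED}$ but does not have the extreme value property $\mathrm{EVP}$.
   Context: $\mathbb{R}^{\mathbb{Z}_<}$ is the set of formal series $\sum_{i\ge -k}a_i\epsilon^i$ ($k\in\mathbb{N}\cup\{0\}$, $a_i\in\mathbb{R}$), with coefficientwise addition, Cauchy-product multiplication and lexicographic order; $|\cdot|$ is the associated absolute value. $f$ satisfies $\mathrm{ED}$ iff at every point $\mathbf{c}$ of its domain, for every positive $\iota_1\in\mathbb{R}^{\mathbb{Z}_<}$ there is a positive $\iota_2\in\mathbb{R}^{\mathbb{Z}_<}$ with $|f(\mathbf{x})-f(\mathbf{c})|<\iota_1$ whenever $|\mathbf{x}-\mathbf{c}|<\iota_2$. For $f:I\to J$ with $I$ an interval, $f$ has $\mathrm{EVP}$ iff for all $a\le b$ in $I$ there is $x\in[a,b]$ with $f(y)\le f(x)$ for all $y\in[a,b]$. *)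

theory Defs
  imports "HOL-Computational_Algebra.Formal_Laurent_Series"
begin

text \<open>The field R^{Z<}: formal Laurent series over the reals (finitely many negative powers),
  ordered lexicographically: x is positive iff its lowest nonzero coefficient is positive.\<close>

type_synonym rz = "real fls"

definition rz_pos :: "rz \<Rightarrow> bool" where
  "rz_pos x \<longleftrightarrow> x \<noteq> 0 \<and> fls_nth x (fls_subdegree x) > 0"

definition rz_less :: "rz \<Rightarrow> rz \<Rightarrow> bool" where
  "rz_less x y \<longleftrightarrow> rz_pos (y - x)"

definition rz_le :: "rz \<Rightarrow> rz \<Rightarrow> bool" where
  "rz_le x y \<longleftrightarrow> x = y \<or> rz_less x y"

definition rz_abs :: "rz \<Rightarrow> rz" where
  "rz_abs x = (if rz_pos x then x else - x)"

definition rz_interval :: "rz set \<Rightarrow> bool" where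
  "rz_interval I \<longleftrightarrow> (\<forall>a\<in>I. \<forall>b\<in>I. \<forall>c. rz_le a c \<and> rz_le c b \<longrightarrow> c \<in> I)"

definition rz_ED :: "rz set \<Rightarrow> (rz \<Rightarrow> rz) \<Rightarrow> bool" where
  "rz_ED I f \<longleftrightarrow> (\<forall>c\<in>I. \<forall>i1. rz_pos i1 \<longrightarrow> (\<exists>i2. rz_pos i2 \<and>
      (\<forall>x\<in>I. rz_less (rz_abs (x - c)) i2 \<longrightarrow> rz_less (rz_abs (f x - f c)) i1)))"

definition rz_EVP :: "rz set \<Rightarrow> (rz \<Rightarrow> rz) \<Rightarrow> bool" where
  "rz_EVP I f \<longleftrightarrow> (\<forall>a\<in>I. \<forall>b\<in>I. rz_le a b \<longrightarrow>
      (\<exists>x. rz_le a x \<and> rz_le x b \<and> (\<forall>y. rz_le a y \<and> rz_le y b \<longrightarrow> rz_le (f y) (f x))))"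

end

theory Submission
  imports Defs
begin

text \<open>Two elements of \<open>\<real>\<^sup>\<int>\<^sub><\<close> at distance less than the infinitesimal \<open>\<epsilon>\<close> differ by a
  multiple of \<open>\<epsilon>\<close>, so they have the same coefficient of \<open>\<epsilon>\<^sup>0\<close>. Hence every function of
  that coefficient is locally constant and satisfies ED. A real function whose supremum on
  \<open>[0, 1]\<close> is not attained anywhere, such as \<open>s \<mapsto> s\<close> on \<open>[0, 1)\<close> and \<open>0\<close> elsewhere, thus
  yields an ED function on \<open>\<real>\<^sup>\<int>\<^sub><\<close> without a maximum on \<open>[0, 1]\<close>.\<close>

unbundle fps_syntax

lemma rz_pos_fls_const_iff: "rz_pos (fls_const r) \<longleftrightarrow> 0 < r"
  by (cases "r = 0") (auto simp: rz_pos_def)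

lemma rz_pos_fls_X: "rz_pos fls_X"
  by (simp add: rz_pos_def)

lemma rz_le_fls_const_iff: "rz_le (fls_const r) (fls_const s) \<longleftrightarrow> r \<le> s"
  by (auto simp: rz_le_def rz_less_def fls_minus_const rz_pos_fls_const_iff
      dest: arg_cong[where f = "\<lambda>x. x $$ 0"])

lemma rz_abs_zero [simp]: "rz_abs 0 = 0"
  by (simp add: rz_abs_def)

lemma fls_subdegree_rz_abs [simp]: "fls_subdegree (rz_abs d) = fls_subdegree d"
  by (simp add: rz_abs_def)

lemma rz_abs_nth_subdegree_pos:
  assumes "d \<noteq> 0"
  shows "0 < rz_abs d $$ fls_subdegree d"
proof -
  have "d $$ fls_subdegree d \<noteq> 0"
    using assms by simp
  then have "0 < d $$ fls_subdegree d \<or> d $$ fls_subdegree d < 0"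
    by linarith
  then show ?thesis
    using assms by (auto simp: rz_abs_def rz_pos_def)
qed

lemma rz_abs_less_fls_X_imp_subdegree_pos:
  assumes "rz_less (rz_abs d) fls_X" and "d \<noteq> 0"
  shows "0 < fls_subdegree d"
proof (rule ccontr)
  assume "\<not> 0 < fls_subdegree d"
  then have sub: "fls_subdegree (rz_abs d) < fls_subdegree (fls_X :: rz)"
    by simp
  have "rz_abs d \<noteq> 0"
    using rz_abs_nth_subdegree_pos[OF assms(2)] by auto
  then have "fls_subdegree (fls_X - rz_abs d) = fls_subdegree d"
    using fls_subdegree_diff_eq2[OF _ sub] by simp
  moreover have "(fls_X - rz_abs d) $$ fls_subdegree d < 0"
    using rz_abs_nth_subdegree_pos[OF assms(2)] sub by simp
  ultimately show False
    using assms(1) by (simp add: rz_less_def rz_pos_def)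
qed

lemma rz_abs_less_fls_X_imp_nth_zero:
  assumes "rz_less (rz_abs d) fls_X"
  shows "d $$ 0 = 0"
  using rz_abs_less_fls_X_imp_subdegree_pos[OF assms] by (cases "d = 0") simp_all

lemma rz_ED_standard_part: "rz_ED I (\<lambda>x. h (x $$ 0))"
  unfolding rz_ED_def
proof (intro ballI allI impI exI conjI)
  fix c x i1 :: rz
  assume "rz_pos i1" and "rz_less (rz_abs (x - c)) fls_X"
  moreover from this(2) have "x $$ 0 = c $$ 0"
    using rz_abs_less_fls_X_imp_nth_zero by fastforce
  ultimately show "rz_less (rz_abs (h (x $$ 0) - h (c $$ 0))) i1"
    by (simp add: rz_less_def)
qed (rule rz_pos_fls_X)

lemma not_rz_EVP_standard_part:
  assumes "fls_const 0 \<in> I" and "fls_const 1 \<in> I"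
    and no_max: "\<And>s. \<exists>t\<in>{0..1}. h s < h t"
  shows "\<not> rz_EVP I (\<lambda>x. fls_const (h (x $$ 0)))"
proof
  assume "rz_EVP I (\<lambda>x. fls_const (h (x $$ 0)))"
  moreover have "rz_le (fls_const 0) (fls_const (1::real))"
    by (rule rz_le_fls_const_iff[THEN iffD2]) simp
  ultimately obtain x where max: "\<And>y. rz_le (fls_const 0) y \<Longrightarrow> rz_le y (fls_const 1) \<Longrightarrow>
      rz_le (fls_const (h (y $$ 0))) (fls_const (h (x $$ 0)))"
    using assms(1,2) unfolding rz_EVP_def by blast
  obtain t where t: "0 \<le> t" "t \<le> 1" and larger: "h (x $$ 0) < h t"
    using no_max by fastforce
  have "rz_le (fls_const 0) (fls_const t)" and "rz_le (fls_const t) (fls_const 1)"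
    using t by (simp_all only: rz_le_fls_const_iff)
  then have "rz_le (fls_const (h t)) (fls_const (h (x $$ 0)))"
    using max by fastforce
  then have "h t \<le> h (x $$ 0)"
    by (simp only: rz_le_fls_const_iff)
  with larger show False
    by linarith
qed

definition sawtooth :: "real \<Rightarrow> real" where
  "sawtooth s = (if 0 \<le> s \<and> s < 1 then s else 0)"

lemma sawtooth_no_max: "\<exists>t\<in>{0..1}. sawtooth s < sawtooth t"
proof
  let ?t = "(sawtooth s + 1) / 2"
  show "?t \<in> {0..1}" and "sawtooth s < sawtooth ?t"
    by (auto simp: sawtooth_def)
qed

theorem mainTheorem6:
  shows "\<exists>(I::rz set) (f::rz \<Rightarrow> rz). rz_interval I \<and> rz_ED I f \<and> \<not> rz_EVP I f"
proof (intro exI conjI)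
  show "rz_interval UNIV"
    by (simp add: rz_interval_def)
  show "rz_ED UNIV (\<lambda>x. fls_const (sawtooth (x $$ 0)))"
    by (rule rz_ED_standard_part)
  show "\<not> rz_EVP UNIV (\<lambda>x. fls_const (sawtooth (x $$ 0)))"
    using sawtooth_no_max by (intro not_rz_EVP_standard_part) auto
qed

end
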